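(* Let $C_2$ be the cyclic group of order $2$. For every $n\ge1$, the $(C_2,* )$-graded $n$-codimension of $M_2(\mathbb{C})$ equipped with the $C_2$-crossed-product grading and the transpose involution is $$c^{C_2}_n=4^n-2^n+1.$$ In particular $c^{C_2}_n\sim2^{2n}$ as $n\to\infty$.
   Context: Let $G=C_2=\{e,\sigma\}$. Index rows/columns of $2\times2$ matrices by $G$, let $E_{a,b}$ be matrix units, $P_g=\sum_{h\in G}E_{h,hg}$, and $M_2(\mathbb{C})_g=\{DP_g: D\text{ diagonal}\}$ (so the $e$-component is the diagonal matrices and the $\sigma$-component the off-diagonal ones); the involution $*$ is transpose. $F=\mathbb{Q}\{x_{i,g},x^*_{i,g}: i\ge1,g\in G\}$ is the free associative algebra; $I(G,* )$ is the set of $f\in F$ vanishing under every substitution $x_{i,g}\mapsto A_{i,g}\in M_2(\mathbb{C})_g$, $x^*_{i,g}\mapsto A_{i,g}^T$. $P^G_n$ is the $\mathbb{Q}$-span of the monomials $x^{\epsilon_1}_{\tau(1),h_1}\cdots x^{\epsilon_n}_{\tau(n),h_n}$ with $\tau\in S_n$, $h_i\in G$, $\epsilon_i\in\{\text{nothing},*\}$, and $c^G_n=\dim_{\mathbb{Q}}P^G_n/(P^G_n\cap I(G,* ))$. *)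

theory Defs
  imports "HOL-Analysis.Analysis" "HOL-Library.Landau_Symbols"
begin

text \<open>The group G = C_2 is modelled by bool: e = False, sigma = True, product = xor.
  2x2 matrices with rows/columns indexed by G are complex^bool^bool.\<close>

definition c2mult :: "bool \<Rightarrow> bool \<Rightarrow> bool" where
  "c2mult h g = (h \<noteq> g)"

definition Pg :: "bool \<Rightarrow> complex^bool^bool" where
  "Pg g = (\<chi> a b. if b = c2mult a g then 1 else 0)"

definition Mgr :: "bool \<Rightarrow> (complex^bool^bool) set" where
  "Mgr g = {D ** Pg g | D. \<forall>a b. a \<noteq> b \<longrightarrow> D $ a $ b = 0}"

text \<open>Letters of the free algebra: (i, g, star) stands for x_{i,g} (star = False)
  or x^*_{i,g} (star = True). Monomials are words (lists of letters).\<close>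
type_synonym letter = "nat \<times> bool \<times> bool"

definition MonP :: "nat \<Rightarrow> letter list set" where
  "MonP n = {w. length w = n \<and> set (map fst w) = {1..n}}"

text \<open>Elements of P^G_n: Q-linear combinations of such monomials (coefficient functions).\<close>
definition PG :: "nat \<Rightarrow> (letter list \<Rightarrow> rat) set" where
  "PG n = {f. \<forall>w. f w \<noteq> 0 \<longrightarrow> w \<in> MonP n}"

definition graded_subst :: "(nat \<Rightarrow> bool \<Rightarrow> complex^bool^bool) \<Rightarrow> bool" where
  "graded_subst A = (\<forall>i g. A i g \<in> Mgr g)"

definition eval_word :: "(nat \<Rightarrow> bool \<Rightarrow> complex^bool^bool) \<Rightarrow> letter list \<Rightarrow> complex^bool^bool" where
  "eval_word A w = foldr (\<lambda>(i, g, s) M. (if s then transpose (A i g) else A i g) ** M) w (mat 1)"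

definition eval_poly :: "nat \<Rightarrow> (nat \<Rightarrow> bool \<Rightarrow> complex^bool^bool) \<Rightarrow> (letter list \<Rightarrow> rat) \<Rightarrow> complex^bool^bool" where
  "eval_poly n A f = (\<chi> a b. \<Sum>w\<in>MonP n. of_rat (f w) * (eval_word A w) $ a $ b)"

definition is_identity :: "nat \<Rightarrow> (letter list \<Rightarrow> rat) \<Rightarrow> bool" where
  "is_identity n f = (\<forall>A. graded_subst A \<longrightarrow> eval_poly n A f = 0)"

definition indep_mod_id :: "nat \<Rightarrow> (letter list \<Rightarrow> rat) list \<Rightarrow> bool" where
  "indep_mod_id n fs = (\<forall>c :: nat \<Rightarrow> rat.
      is_identity n (\<lambda>w. \<Sum>j<length fs. c j * (fs ! j) w) \<longrightarrow> (\<forall>j<length fs. c j = 0))"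

text \<open>c^G_n = dim_Q P^G_n / (P^G_n \<inter> I(G,*)): maximal size of a family in P^G_n
  linearly independent modulo the identities.\<close>
definition codimG :: "nat \<Rightarrow> nat" where
  "codimG n = (GREATEST k. \<exists>fs. length fs = k \<and> set fs \<subseteq> PG n \<and> indep_mod_id n fs)"

end

theory Submission
  imports Defs "HOL-Library.Function_Algebras"
begin

text \<open>A graded substitution sends every variable to a matrix with exactly one possibly nonzero
  entry in each row, so evaluating a multilinear monomial at the entry (r, c) follows a single
  path of rows: each variable i contributes one entry of A i g_i, determined by its grading
  g_i and the row r_i at which that entry is read. The pair assignment
  i \<mapsto> (g_i, r_i), normalised to a path starting in row e, is the key of the monomial;
  monomials with equal keys evaluate identically, and substituting matrix units separates distinct
  keys. Hence the codimension is the number of keys realised by monomials. If some variable is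
  \<sigma>-graded, every assignment is realised (the \<sigma>-graded letters move the path between rows
  as needed); otherwise the path never leaves row e. This gives 4^n - 2^n + 1 keys.\<close>

lemma Mgr_entry_zero:
  assumes "X \<in> Mgr g" "b \<noteq> (a \<noteq> g)"
  shows "X $ a $ b = 0"
proof -
  obtain D where D: "X = D ** Pg g" "\<forall>a b. a \<noteq> b \<longrightarrow> D $ a $ b = 0"
    using assms(1) unfolding Mgr_def by auto
  have "D $ True $ False = 0" "D $ False $ True = 0"
    using D(2)[rule_format, of True False] D(2)[rule_format, of False True] by auto
  then show ?thesis using assms(2) unfolding D(1)
    by (cases a; cases b; cases g) (auto simp: matrix_matrix_mult_def UNIV_bool Pg_def c2mult_def)
qed

lemma matrix_unit_in_Mgr:
  "(\<chi> a b. if a = p \<and> b = (p \<noteq> g) then (1::complex) else 0) \<in> Mgr g"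
proof -
  let ?D = "(\<chi> a b. if a = p \<and> b = p then (1::complex) else 0)"
  have "(\<chi> a b. if a = p \<and> b = (p \<noteq> g) then (1::complex) else 0) = ?D ** Pg g"
    by (auto simp: vec_eq_iff matrix_matrix_mult_def UNIV_bool Pg_def c2mult_def)
  moreover have "\<forall>a b. a \<noteq> b \<longrightarrow> ?D $ a $ b = 0" by auto
  ultimately show ?thesis unfolding Mgr_def by blast
qed

lemma zero_in_Mgr: "(0::complex^bool^bool) \<in> Mgr g"
proof -
  have "(0::complex^bool^bool) = 0 ** Pg g"
    by (auto simp: vec_eq_iff matrix_matrix_mult_def)
  moreover have "\<forall>a b. a \<noteq> b \<longrightarrow> (0::complex^bool^bool) $ a $ b = 0" by simp
  ultimately show ?thesis unfolding Mgr_def by blast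
qed

subsection \<open>Keys of words\<close>

text \<open>\<open>word_key r w i\<close> is the pair (grading, row) of the entry of variable i that the
  evaluation of w uses when the path starts in row r; a starred letter reads the transpose, hence
  the row shift by \<open>g \<and> s\<close>.\<close>

fun word_key :: "bool \<Rightarrow> letter list \<Rightarrow> nat \<Rightarrow> bool \<times> bool" where
  "word_key r [] = (\<lambda>_. undefined)"
| "word_key r ((i, g, s) # w) = (word_key (r \<noteq> g) w)(i := (g, r \<noteq> (g \<and> s)))"

fun word_degree :: "letter list \<Rightarrow> bool" where
  "word_degree [] = False"
| "word_degree ((i, g, s) # w) = (g \<noteq> word_degree w)"

lemma eval_word_Cons:
  "eval_word A ((i, g, s) # w) = (if s then transpose (A i g) else A i g) ** eval_word A w"
  by (simp add: eval_word_def)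

lemma eval_word_entry:
  assumes A: "graded_subst A" and "distinct (map fst w)"
  shows "eval_word A w $ r $ c =
    (if c = (r \<noteq> word_degree w) then (\<Prod>i\<in>set (map fst w).
        A i (fst (word_key r w i)) $ snd (word_key r w i) $ (snd (word_key r w i) \<noteq> fst (word_key r w i)))
     else 0)"
  using assms(2)
proof (induction w arbitrary: r)
  case Nil
  then show ?case by (auto simp: eval_word_def mat_def)
next
  case (Cons l w)
  obtain i g s where l: "l = (i, g, s)" by (cases l) auto
  have Ag: "A i g \<in> Mgr g" using A unfolding graded_subst_def by auto
  have iw: "i \<notin> set (map fst w)" and dw: "distinct (map fst w)" using Cons.prems l by auto
  let ?M = "if s then transpose (A i g) else A i g"
  let ?P = "\<lambda>r. \<Prod>j\<in>set (map fst w). A j (fst (word_key r w j)) $ snd (word_key r w j)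
                 $ (snd (word_key r w j) \<noteq> fst (word_key r w j))"
  have "?M $ r $ k = 0" if "k \<noteq> (r \<noteq> g)" for k
    using Mgr_entry_zero[OF Ag, of r k] Mgr_entry_zero[OF Ag, of k r] that
    by (cases s) (auto simp: transpose_def)
  have "eval_word A (l # w) $ r $ c = (\<Sum>k\<in>UNIV. ?M $ r $ k * eval_word A w $ k $ c)"
    by (simp add: l eval_word_Cons matrix_matrix_mult_def)
  also have "\<dots> = ?M $ r $ (r \<noteq> g) * eval_word A w $ (r \<noteq> g) $ c"
    using \<open>\<And>k. k \<noteq> (r \<noteq> g) \<Longrightarrow> ?M $ r $ k = 0\<close> by (cases r; cases g) (auto simp: UNIV_bool)
  also have "?M $ r $ (r \<noteq> g) = A i g $ (r \<noteq> (g \<and> s)) $ ((r \<noteq> (g \<and> s)) \<noteq> g)"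
    by (cases s; cases g; cases r) (auto simp: transpose_def)
  also have "eval_word A w $ (r \<noteq> g) $ c = (if c = ((r \<noteq> g) \<noteq> word_degree w) then ?P (r \<noteq> g) else 0)"
    using Cons.IH[OF dw] .
  also have "?P (r \<noteq> g) = (\<Prod>j\<in>set (map fst w). A j (fst (word_key r (l # w) j))
      $ snd (word_key r (l # w) j) $ (snd (word_key r (l # w) j) \<noteq> fst (word_key r (l # w) j)))"
    by (rule prod.cong) (use iw in \<open>auto simp: l\<close>)
  finally show ?case using iw by (auto simp: l)
qed

lemma word_key_start:
  "i \<in> set (map fst w) \<Longrightarrow> word_key r w i = (fst (word_key False w i), snd (word_key False w i) \<noteq> r)"
proof (induction w arbitrary: r)
  case (Cons l w)
  obtain j g s where l: "l = (j, g, s)" by (cases l) auto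
  show ?case
  proof (cases "i = j")
    case False
    then have "i \<in> set (map fst w)" using Cons.prems l by auto
    with Cons.IH[OF this, of "r \<noteq> g"] Cons.IH[OF this, of g] False show ?thesis
      by (auto simp: l)
  qed (auto simp: l)
qed simp

lemma word_key_notin: "i \<notin> set (map fst w) \<Longrightarrow> word_key r w i = undefined"
  by (induction w arbitrary: r) auto

lemma word_degree_odd_card:
  "distinct (map fst w) \<Longrightarrow> word_degree w = odd (card {i\<in>set (map fst w). fst (word_key r w i)})"
proof (induction w arbitrary: r)
  case (Cons l w)
  obtain j g s where l: "l = (j, g, s)" by (cases l) auto
  have jw: "j \<notin> set (map fst w)" and dw: "distinct (map fst w)" using Cons.prems l by auto
  have "{i\<in>set (map fst (l # w)). fst (word_key r (l # w) i)} =
     (if g then insert j else id) {i\<in>set (map fst w). fst (word_key (r \<noteq> g) w i)}"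
    using jw by (auto simp: l)
  then show ?case using Cons.IH[OF dw, of "r \<noteq> g"] jw by (cases g) (auto simp: l)
qed simp

lemma word_key_no_odd:
  assumes "distinct (map fst w)" "\<forall>i\<in>set (map fst w). \<not> fst (word_key r w i)" "i \<in> set (map fst w)"
  shows "word_key r w i = (False, r)"
  using assms
proof (induction w arbitrary: i)
  case (Cons l w)
  obtain j g s where l: "l = (j, g, s)" by (cases l) auto
  have jw: "j \<notin> set (map fst w)" and dw: "distinct (map fst w)" using Cons.prems(1) l by auto
  have g: "\<not> g" using Cons.prems(2) l by auto
  have "\<not> fst (word_key r w i)" if "i \<in> set (map fst w)" for i
    using Cons.prems(2) jw g that by (auto simp: l split: if_splits)
  with Cons.IH[OF dw] Cons.prems(3) g show ?case by (auto simp: l)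
qed simp

lemma MonP_distinct: "w \<in> MonP n \<Longrightarrow> distinct (map fst w)"
  by (rule card_distinct) (auto simp: MonP_def)

lemma MonP_vars: "w \<in> MonP n \<Longrightarrow> set (map fst w) = {1..n}"
  by (auto simp: MonP_def)

lemma finite_MonP: "finite (MonP n)"
proof -
  have "MonP n \<subseteq> {w. set w \<subseteq> {1..n} \<times> UNIV \<and> length w = n}"
    by (force simp: MonP_def)
  moreover have "finite {w. set w \<subseteq> ({1..n} \<times> (UNIV :: (bool \<times> bool) set)) \<and> length w = n}"
    by (rule finite_lists_length_eq) simp
  ultimately show ?thesis by (rule finite_subset)
qed

subsection \<open>Admissible keys\<close>

definition admissible_keys :: "nat \<Rightarrow> (nat \<Rightarrow> bool \<times> bool) set" where
  "admissible_keys n = PiE {1..n} (\<lambda>_. UNIV) \<inter>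
     {K. (\<exists>i\<in>{1..n}. fst (K i)) \<or> (\<forall>i\<in>{1..n}. K i = (False, False))}"

definition key_degree :: "nat \<Rightarrow> (nat \<Rightarrow> bool \<times> bool) \<Rightarrow> bool" where
  "key_degree n K = odd (card {i\<in>{1..n}. fst (K i)})"

text \<open>Starting the path in row r instead of row e shifts every row read by r.\<close>

definition key_eval ::
  "(nat \<Rightarrow> bool \<Rightarrow> complex^bool^bool) \<Rightarrow> nat \<Rightarrow> (nat \<Rightarrow> bool \<times> bool) \<Rightarrow> complex^bool^bool" where
  "key_eval A n K = (\<chi> r c. if c = (r \<noteq> key_degree n K) then
      (\<Prod>i\<in>{1..n}. A i (fst (K i)) $ (snd (K i) \<noteq> r) $ ((snd (K i) \<noteq> r) \<noteq> fst (K i))) else 0)"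

lemma eval_word_key_eval:
  assumes A: "graded_subst A" and w: "w \<in> MonP n"
  shows "eval_word A w = key_eval A n (word_key False w)"
proof -
  have d: "distinct (map fst w)" and vars: "set (map fst w) = {1..n}"
    using MonP_distinct[OF w] MonP_vars[OF w] by auto
  have "eval_word A w $ r $ c = key_eval A n (word_key False w) $ r $ c" for r c
  proof -
    have degree: "word_degree w = key_degree n (word_key False w)"
      using word_degree_odd_card[OF d, of False] vars by (simp add: key_degree_def)
    have prod: "(\<Prod>i\<in>set (map fst w). A i (fst (word_key r w i)) $ snd (word_key r w i)
          $ (snd (word_key r w i) \<noteq> fst (word_key r w i)))
       = (\<Prod>i\<in>{1..n}. A i (fst (word_key False w i)) $ (snd (word_key False w i) \<noteq> r)
          $ ((snd (word_key False w i) \<noteq> r) \<noteq> fst (word_key False w i)))"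
      unfolding vars by (rule prod.cong) (use word_key_start[of _ w r] vars in auto)
    show ?thesis by (simp add: key_eval_def eval_word_entry[OF A d, of r c, unfolded degree prod])
  qed
  then show ?thesis by (simp add: vec_eq_iff)
qed

lemma word_key_admissible:
  assumes w: "w \<in> MonP n"
  shows "word_key False w \<in> admissible_keys n"
proof -
  have d: "distinct (map fst w)" and vars: "set (map fst w) = {1..n}"
    using MonP_distinct[OF w] MonP_vars[OF w] by auto
  have "word_key False w \<in> PiE {1..n} (\<lambda>_. UNIV)"
    using word_key_notin[of _ w False] vars by (auto simp: PiE_def extensional_def)
  moreover have "(\<forall>i\<in>{1..n}. word_key False w i = (False, False))"
    if "\<not> (\<exists>i\<in>{1..n}. fst (word_key False w i))"
    using word_key_no_odd[OF d, of False, unfolded vars] that by blast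
  ultimately show ?thesis by (auto simp: admissible_keys_def)
qed

text \<open>A \<sigma>-graded letter can be read in either row by choosing whether it is starred, an
  e-graded letter only in the current row: \<open>key_fits K r xs\<close> says that along the path
  starting in row r each e-graded variable of xs is met in its prescribed row.\<close>

fun key_word :: "(nat \<Rightarrow> bool \<times> bool) \<Rightarrow> bool \<Rightarrow> nat list \<Rightarrow> letter list" where
  "key_word K r [] = []"
| "key_word K r (i # is) = (i, fst (K i), fst (K i) \<and> (r \<noteq> snd (K i))) # key_word K (r \<noteq> fst (K i)) is"

fun key_fits :: "(nat \<Rightarrow> bool \<times> bool) \<Rightarrow> bool \<Rightarrow> nat list \<Rightarrow> bool" where
  "key_fits K r [] = True"
| "key_fits K r (i # is) = ((fst (K i) \<or> snd (K i) = r) \<and> key_fits K (r \<noteq> fst (K i)) is)"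

lemma map_fst_key_word: "map fst (key_word K r xs) = xs"
  by (induction xs arbitrary: r) auto

lemma word_key_key_word:
  "key_fits K r xs \<Longrightarrow> j \<in> set xs \<Longrightarrow> word_key r (key_word K r xs) j = K j"
  by (induction xs arbitrary: r) (auto simp: prod_eq_iff)

lemma key_fits_append:
  "key_fits K r (xs @ ys) \<longleftrightarrow> key_fits K r xs \<and> key_fits K (r \<noteq> word_degree (key_word K r xs)) ys"
proof (induction xs arbitrary: r)
  case (Cons i xs)
  have "((r \<noteq> fst (K i)) \<noteq> word_degree (key_word K (r \<noteq> fst (K i)) xs))
      = (r \<noteq> (fst (K i) \<noteq> word_degree (key_word K (r \<noteq> fst (K i)) xs)))" by blast
  with Cons.IH[of "r \<noteq> fst (K i)"] show ?case by simp
qed simp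

lemma key_fits_even:
  "\<forall>i\<in>set xs. K i = (False, r) \<Longrightarrow> key_fits K r xs \<and> \<not> word_degree (key_word K r xs)"
  by (induction xs) auto

lemma key_fits_odd: "\<forall>i\<in>set xs. fst (K i) \<Longrightarrow> key_fits K r xs"
  by (induction xs arbitrary: r) auto

lemma fitting_enumeration:
  assumes K: "K \<in> admissible_keys n"
  obtains xs where "distinct xs" "set xs = {1..n}" "key_fits K False xs"
proof (cases "\<exists>i\<in>{1..n}. fst (K i)")
  case False
  then have "\<forall>i\<in>set [1..<n+1]. K i = (False, False)"
    using K by (auto simp: admissible_keys_def)
  then have "key_fits K False [1..<n+1]" using key_fits_even by blast
  moreover have "distinct [1..<n+1]" "set [1..<n+1] = {1..n}" by (auto simp del: upt_Suc)
  ultimately show ?thesis using that by blast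
next
  case True
  then obtain j where j: "j \<in> {1..n}" "fst (K j)" by blast
  define E0 where "E0 = {i\<in>{1..n}. K i = (False, False)}"
  define E1 where "E1 = {i\<in>{1..n}. K i = (False, True)}"
  define Od where "Od = {i\<in>{1..n}. fst (K i)} - {j}"
  define xs where "xs = sorted_list_of_set E0 @ [j] @ sorted_list_of_set E1 @ sorted_list_of_set Od"
  have fin: "finite E0" "finite E1" "finite Od" by (simp_all add: E0_def E1_def Od_def)
  have disj: "j \<notin> E0" "j \<notin> E1" "E0 \<inter> E1 = {}" "E0 \<inter> Od = {}" "E1 \<inter> Od = {}" "j \<notin> Od"
    using j by (auto simp: E0_def E1_def Od_def)
  have "distinct xs" using fin disj by (auto simp: xs_def)
  moreover have "E0 \<union> {j} \<union> E1 \<union> Od = {1..n}"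
  proof -
    have "i \<in> E0 \<union> {j} \<union> E1 \<union> Od \<longleftrightarrow> i \<in> {1..n}" for i
      using j by (cases "K i") (auto simp: E0_def E1_def Od_def)
    then show ?thesis by blast
  qed
  then have "set xs = {1..n}" using fin by (auto simp: xs_def)
  moreover have "key_fits K False xs"
  proof -
    have "key_fits K False (sorted_list_of_set E0)" "\<not> word_degree (key_word K False (sorted_list_of_set E0))"
      using key_fits_even[of "sorted_list_of_set E0" K False] fin by (auto simp: E0_def)
    moreover have "key_fits K True (sorted_list_of_set E1)" "\<not> word_degree (key_word K True (sorted_list_of_set E1))"
      using key_fits_even[of "sorted_list_of_set E1" K True] fin by (auto simp: E1_def)
    moreover have "key_fits K r (sorted_list_of_set Od)" for r
      using key_fits_odd[of "sorted_list_of_set Od" K] fin by (auto simp: Od_def)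
    ultimately show ?thesis using j by (simp add: xs_def key_fits_append)
  qed
  ultimately show ?thesis using that by blast
qed

lemma admissible_key_realised:
  assumes K: "K \<in> admissible_keys n"
  shows "\<exists>w\<in>MonP n. word_key False w = K"
proof -
  obtain xs where xs: "distinct xs" "set xs = {1..n}" "key_fits K False xs"
    using fitting_enumeration[OF K] .
  let ?w = "key_word K False xs"
  have "length ?w = length (map fst ?w)" by simp
  also have "\<dots> = length xs" by (simp only: map_fst_key_word)
  also have "\<dots> = n" using distinct_card[OF xs(1)] xs(2) by simp
  moreover have "set (map fst ?w) = {1..n}" by (simp only: map_fst_key_word xs(2))
  ultimately have "?w \<in> MonP n" by (simp add: MonP_def)
  moreover have "word_key False ?w j = K j" for j
  proof (cases "j \<in> {1..n}")
    case True
    then show ?thesis using word_key_key_word[OF xs(3)] xs(2) by blast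
  next
    case False
    have "K \<in> PiE {1..n} (\<lambda>_. UNIV)" using K by (simp add: admissible_keys_def)
    then have "K j = undefined" using False by (rule PiE_arb)
    moreover have "j \<notin> set (map fst ?w)" using False xs(2) by (simp add: map_fst_key_word)
    ultimately show ?thesis using word_key_notin by metis
  qed
  ultimately show ?thesis by blast
qed

lemma finite_admissible_keys: "finite (admissible_keys n)"
  unfolding admissible_keys_def by (simp add: finite_PiE)

lemma card_admissible_keys: "card (admissible_keys n) = 4 ^ n - 2 ^ n + 1"
proof -
  define P where "P = PiE {1..n} (\<lambda>_. (UNIV :: (bool \<times> bool) set))"
  define Q where "Q = PiE {1..n} (\<lambda>_. {False} \<times> (UNIV :: bool set))"
  define z where "z = (\<lambda>i\<in>{1..n}. (False, False))"
  have QP: "Q \<subseteq> P" by (auto simp: P_def Q_def PiE_def Pi_def)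
  have fin: "finite P" by (simp add: P_def finite_PiE)
  have "admissible_keys n = insert z (P - Q)"
    by (auto simp: admissible_keys_def P_def Q_def z_def PiE_iff extensional_def
        fun_eq_iff mem_Times_iff)
  moreover have "z \<notin> P - Q" by (auto simp: Q_def z_def)
  moreover have "card (P - Q) = 4 ^ n - 2 ^ n"
    using card_Diff_subset[OF finite_subset[OF QP fin] QP]
    by (simp add: P_def Q_def card_PiE card_UNIV_bool card_cartesian_product)
  moreover have "(2::nat) ^ n \<le> 4 ^ n" by (simp add: power_mono)
  ultimately show ?thesis using fin by simp
qed

subsection \<open>Separating keys by matrix units\<close>

definition unit_subst :: "nat \<Rightarrow> (nat \<Rightarrow> bool \<times> bool) \<Rightarrow> nat \<Rightarrow> bool \<Rightarrow> complex^bool^bool" where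
  "unit_subst n K i g = (if i \<in> {1..n} \<and> g = fst (K i)
      then (\<chi> a b. if a = snd (K i) \<and> b = (snd (K i) \<noteq> g) then 1 else 0) else 0)"

lemma unit_subst_graded: "graded_subst (unit_subst n K)"
  unfolding graded_subst_def unit_subst_def using matrix_unit_in_Mgr zero_in_Mgr by auto

lemma key_eval_unit_subst:
  assumes K: "K \<in> admissible_keys n" and K': "K' \<in> admissible_keys n"
  shows "key_eval (unit_subst n K) n K' $ False $ key_degree n K = (if K' = K then 1 else 0)"
proof (cases "K' = K")
  case True
  then show ?thesis by (auto simp: key_eval_def unit_subst_def intro!: prod.neutral)
next
  case False
  have "K \<in> PiE {1..n} (\<lambda>_. UNIV)" "K' \<in> PiE {1..n} (\<lambda>_. UNIV)"
    using K K' by (auto simp: admissible_keys_def)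
  with False obtain i where i: "i \<in> {1..n}" "K' i \<noteq> K i"
    using PiE_ext by blast
  have "unit_subst n K i (fst (K' i)) $ snd (K' i) $ (snd (K' i) \<noteq> fst (K' i)) = 0"
    using i(2) by (cases "K i"; cases "K' i") (auto simp: unit_subst_def)
  then have "(\<Prod>i\<in>{1..n}. unit_subst n K i (fst (K' i)) $ (snd (K' i) \<noteq> False)
      $ ((snd (K' i) \<noteq> False) \<noteq> fst (K' i))) = 0"
    using i(1) by (intro prod_zero) auto
  then show ?thesis using False by (simp add: key_eval_def)
qed

definition key_coeff :: "nat \<Rightarrow> (letter list \<Rightarrow> rat) \<Rightarrow> (nat \<Rightarrow> bool \<times> bool) \<Rightarrow> rat" where
  "key_coeff n f K = (\<Sum>w\<in>{w\<in>MonP n. word_key False w = K}. f w)"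

lemma key_coeff_notin: "K \<notin> admissible_keys n \<Longrightarrow> key_coeff n f K = 0"
  unfolding key_coeff_def using word_key_admissible by (intro sum.neutral) auto

lemma key_coeff_lincomb:
  "key_coeff n (\<lambda>w. \<Sum>j<k. c j * (fs ! j) w) K = (\<Sum>j<k. c j * key_coeff n (fs ! j) K)"
  unfolding key_coeff_def by (simp add: sum_distrib_left sum.swap[of _ "{..<k}"])

lemma key_coeff_indicator:
  assumes "w \<in> MonP n"
  shows "key_coeff n (\<lambda>u. if u = w then 1 else 0) K = (if word_key False w = K then 1 else 0)"
  using assms finite_MonP by (simp add: key_coeff_def sum.delta')

lemma eval_poly_key_coeff:
  assumes A: "graded_subst A"
  shows "eval_poly n A f $ a $ b =
    (\<Sum>K\<in>admissible_keys n. of_rat (key_coeff n f K) * key_eval A n K $ a $ b)"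
proof -
  have "eval_poly n A f $ a $ b = (\<Sum>w\<in>MonP n. of_rat (f w) * key_eval A n (word_key False w) $ a $ b)"
    by (simp add: eval_poly_def eval_word_key_eval[OF A])
  also have "\<dots> = (\<Sum>K\<in>admissible_keys n. \<Sum>w\<in>{w\<in>MonP n. word_key False w = K}.
      of_rat (f w) * key_eval A n (word_key False w) $ a $ b)"
    by (rule sum.group[symmetric]) (use finite_MonP finite_admissible_keys word_key_admissible in auto)
  also have "\<dots> = (\<Sum>K\<in>admissible_keys n. of_rat (key_coeff n f K) * key_eval A n K $ a $ b)"
    by (rule sum.cong) (auto simp: key_coeff_def of_rat_sum sum_distrib_right)
  finally show ?thesis .
qed

lemma is_identity_iff_key_coeff:
  "is_identity n f \<longleftrightarrow> (\<forall>K\<in>admissible_keys n. key_coeff n f K = 0)"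
proof
  assume "\<forall>K\<in>admissible_keys n. key_coeff n f K = 0"
  then show "is_identity n f"
    unfolding is_identity_def using eval_poly_key_coeff by (auto simp: vec_eq_iff)
next
  assume I: "is_identity n f"
  show "\<forall>K\<in>admissible_keys n. key_coeff n f K = 0"
  proof
    fix K assume K: "K \<in> admissible_keys n"
    have "0 = eval_poly n (unit_subst n K) f $ False $ key_degree n K"
      using I unit_subst_graded unfolding is_identity_def by simp
    also have "\<dots> = (\<Sum>K'\<in>admissible_keys n. of_rat (key_coeff n f K') * (if K' = K then 1 else 0))"
      using eval_poly_key_coeff[OF unit_subst_graded] key_eval_unit_subst[OF K] by simp
    also have "\<dots> = of_rat (key_coeff n f K)"
      using K finite_admissible_keys by (simp add: if_distrib sum.delta' cong: if_cong)
    finally show "key_coeff n f K = 0" by simp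
  qed
qed

subsection \<open>Dimension count\<close>

lemma fun_vector_space: "Vector_Spaces.vector_space (\<lambda>(c::'k::field) (f::'a \<Rightarrow> 'k) x. c * f x)"
  by unfold_locales (auto simp: fun_eq_iff algebra_simps)

lemma sum_apply: "(\<Sum>y\<in>A. g y) x = (\<Sum>y\<in>A. g y x)"
  by (induction A rule: infinite_finite_induct) auto

lemma finite_support_dependent:
  fixes v :: "nat \<Rightarrow> 'a \<Rightarrow> 'k::field"
  assumes T: "finite T" "card T < k" and supp: "\<And>j x. j < k \<Longrightarrow> x \<notin> T \<Longrightarrow> v j x = 0"
  shows "\<exists>c. (\<exists>j<k. c j \<noteq> 0) \<and> (\<forall>x. (\<Sum>j<k. c j * v j x) = 0)"
proof (cases "inj_on v {..<k}")
  case False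
  then obtain i j where ij: "i < k" "j < k" "i \<noteq> j" "v i = v j" unfolding inj_on_def by auto
  define c where "c m = (if m = i then 1 else if m = j then -1 else 0 :: 'k)" for m :: nat
  have "(\<Sum>m<k. c m * v m x) = (\<Sum>m\<in>{i,j}. c m * v m x)" for x
    by (rule sum.mono_neutral_right) (use ij in \<open>auto simp: c_def\<close>)
  then show ?thesis using ij by (intro exI[of _ c]) (auto simp: c_def)
next
  case True
  interpret V: vector_space "\<lambda>(c::'k) (f::'a \<Rightarrow> 'k) x. c * f x" by (rule fun_vector_space)
  define B where "B = (\<lambda>t x. if x = t then 1 else (0::'k)) ` T"
  have "f \<in> V.span B" if "f \<in> v ` {..<k}" for f
  proof -
    from that obtain j where j: "j < k" "f = v j" by auto
    have "f = (\<Sum>t\<in>T. (\<lambda>x. v j t * (if x = t then 1 else 0)))"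
      using T(1) supp[OF j(1)] by (auto simp: j(2) fun_eq_iff sum_apply if_distrib sum.delta cong: if_cong)
    also have "\<dots> \<in> V.span B"
      by (intro V.span_sum V.span_scale V.span_base) (auto simp: B_def)
    finally show ?thesis .
  qed
  moreover have "card B < card (v ` {..<k})"
    using card_image_le[OF T(1), of "\<lambda>t x. if x = t then 1 else (0::'k)"] T(2) True
    by (simp add: B_def card_image)
  ultimately have "V.dependent (v ` {..<k})"
    using V.independent_span_bound[of B] T(1) by (force simp: B_def)
  then obtain t u where tu: "finite t" "t \<subseteq> v ` {..<k}"
    "(\<Sum>y\<in>t. (\<lambda>x. u y * y x)) = 0" "\<exists>y\<in>t. u y \<noteq> 0"
    unfolding V.dependent_explicit by blast
  define c where "c j = (if v j \<in> t then u (v j) else 0)" for j :: nat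
  have "(\<Sum>j<k. c j * v j x) = 0" for x
  proof -
    have "(\<Sum>j<k. c j * v j x) = (\<Sum>j\<in>{j\<in>{..<k}. v j \<in> t}. u (v j) * v j x)"
      by (rule sum.mono_neutral_cong_right) (auto simp: c_def)
    also have "\<dots> = (\<Sum>y\<in>v ` {j\<in>{..<k}. v j \<in> t}. u y * y x)"
      by (rule sum.reindex[symmetric, unfolded comp_def]) (rule inj_on_subset[OF True], auto)
    also have "v ` {j\<in>{..<k}. v j \<in> t} = t" using tu(2) by auto
    also have "(\<Sum>y\<in>t. u y * y x) = (\<Sum>y\<in>t. (\<lambda>x. u y * y x)) x"
      by (simp add: sum_apply)
    finally show ?thesis using tu(3) by simp
  qed
  moreover obtain j where "j < k" "v j \<in> t" "u (v j) \<noteq> 0" using tu(2,4) by blast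
  ultimately show ?thesis by (intro exI[of _ c]) (auto simp: c_def)
qed

lemma indep_mod_id_length_le:
  assumes "indep_mod_id n fs"
  shows "length fs \<le> card (admissible_keys n)"
proof (rule ccontr)
  assume "\<not> length fs \<le> card (admissible_keys n)"
  then have "card (admissible_keys n) < length fs" by simp
  from finite_support_dependent[OF finite_admissible_keys this, of "\<lambda>j. key_coeff n (fs ! j)"]
  obtain c where c: "\<exists>j<length fs. c j \<noteq> 0" "\<forall>K. (\<Sum>j<length fs. c j * key_coeff n (fs ! j) K) = 0"
    using key_coeff_notin by blast
  have "is_identity n (\<lambda>w. \<Sum>j<length fs. c j * (fs ! j) w)"
    unfolding is_identity_iff_key_coeff key_coeff_lincomb using c(2) by simp
  with assms c(1) show False unfolding indep_mod_id_def by blast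
qed

lemma indep_mod_id_exists:
  "\<exists>fs. length fs = card (admissible_keys n) \<and> set fs \<subseteq> PG n \<and> indep_mod_id n fs"
proof -
  obtain Ks where Ks: "set Ks = admissible_keys n" "distinct Ks"
    using finite_distinct_list[OF finite_admissible_keys] by blast
  have "\<forall>K\<in>admissible_keys n. \<exists>w. w \<in> MonP n \<and> word_key False w = K"
    using admissible_key_realised by blast
  then obtain mon where mon: "\<forall>K\<in>admissible_keys n. mon K \<in> MonP n \<and> word_key False (mon K) = K"
    by (auto dest: bchoice)
  define fs where "fs = map (\<lambda>K w. if w = mon K then (1::rat) else 0) Ks"
  have len: "length fs = length Ks" by (simp add: fs_def)
  have Ks_nth: "Ks ! m \<in> admissible_keys n" if "m < length fs" for m
    using nth_mem[of m Ks] that len Ks(1) by simp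
  have "length fs = card (admissible_keys n)" using Ks len by (simp add: distinct_card[symmetric])
  moreover have "set fs \<subseteq> PG n" using Ks(1) mon by (auto simp: fs_def PG_def split: if_splits)
  moreover have "indep_mod_id n fs" unfolding indep_mod_id_def
  proof (intro allI impI)
    fix c :: "nat \<Rightarrow> rat" and j
    assume I: "is_identity n (\<lambda>w. \<Sum>m<length fs. c m * (fs ! m) w)" and j: "j < length fs"
    have coeff: "key_coeff n (fs ! m) (Ks ! j) = (if m = j then 1 else 0)" if m: "m < length fs" for m
    proof -
      from mon Ks_nth[OF m] have "key_coeff n (fs ! m) (Ks ! j) = (if Ks ! m = Ks ! j then 1 else 0)"
        using m by (simp add: fs_def key_coeff_indicator)
      also have "(Ks ! m = Ks ! j) = (m = j)"
        using m j nth_eq_iff_index_eq[OF Ks(2)] by (simp add: fs_def)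
      finally show ?thesis .
    qed
    from Ks_nth[OF j] have "0 = (\<Sum>m<length fs. c m * key_coeff n (fs ! m) (Ks ! j))"
      using I unfolding is_identity_iff_key_coeff key_coeff_lincomb by simp
    also have "\<dots> = c j" using j by (simp add: coeff if_distrib sum.delta' cong: if_cong)
    finally show "c j = 0" by simp
  qed
  ultimately show ?thesis by blast
qed

lemma codimG_eq_card: "codimG n = card (admissible_keys n)"
  unfolding codimG_def
  using indep_mod_id_exists indep_mod_id_length_le by (intro Greatest_equality) blast+

lemma asymp_equiv_four_pow: "(\<lambda>n::nat. (4::real) ^ n - 2 ^ n + 1) \<sim>[at_top] (\<lambda>n. 2 ^ (2 * n))"
proof (rule asymp_equivI')
  have "((4::real) ^ n - 2 ^ n + 1) / 2 ^ (2 * n) = 1 - (1/2) ^ n + (1/4) ^ n" for n :: nat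
  proof -
    have "(2::real) ^ (2 * n) = 4 ^ n" by (simp add: power_mult)
    moreover have "(4::real) ^ n = 2 ^ n * 2 ^ n" by (simp flip: power_mult_distrib)
    moreover have "(1/4::real) ^ n = 1 / (2 ^ n * 2 ^ n)"
      by (simp add: power_one_over flip: power_mult_distrib)
    ultimately show ?thesis by (simp add: power_one_over field_simps)
  qed
  moreover have "(\<lambda>n::nat. 1 - (1/2::real) ^ n + (1/4) ^ n) \<longlonglongrightarrow> 1 - 0 + 0"
    by (intro tendsto_intros) auto
  ultimately show "(\<lambda>n::nat. ((4::real) ^ n - 2 ^ n + 1) / 2 ^ (2 * n)) \<longlonglongrightarrow> 1"
    by simp
qed

theorem mainTheorem18:
  shows "(\<forall>n::nat. n \<ge> 1 \<longrightarrow> codimG n = 4 ^ n - 2 ^ n + 1)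
         \<and> (\<lambda>n. real (codimG n)) \<sim>[at_top] (\<lambda>n. 2 ^ (2 * n))"
proof
  show "\<forall>n::nat. n \<ge> 1 \<longrightarrow> codimG n = 4 ^ n - 2 ^ n + 1"
    by (simp add: codimG_eq_card card_admissible_keys)
  have "real (codimG n) = 4 ^ n - 2 ^ n + 1" for n
    using power_mono[of "2::nat" 4 n] by (simp add: codimG_eq_card card_admissible_keys of_nat_diff)
  then show "(\<lambda>n. real (codimG n)) \<sim>[at_top] (\<lambda>n. 2 ^ (2 * n))"
    using asymp_equiv_four_pow by simp
qed

end
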